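(* Let $k\ge2$ be an even integer and $Q_k(t)=t^k+k(t+1)^{k-1}-(t+1)^k$. Then there are constants $\bar C_k,\bar C_k'>0$ depending only on $k$ such that $$\bar C_k(t^{k-2}+1)\le Q_k(t)\le \bar C_k'(t^{k-2}+1)\quad\text{for all }t\in\mathbb{R}.$$ *)

theory Defs
  imports Complex_Main
begin

definition Q :: "nat \<Rightarrow> real \<Rightarrow> real" where
  "Q k t = t ^ k + real k * (t + 1) ^ (k - 1) - (t + 1) ^ k"

end

theory Submission
  imports Defs
begin

text \<open>Expanding \<open>t ^ k\<close> around \<open>t + 1\<close> to second order with Lagrange remainder gives
  \<open>Q k t = (k choose 2) * z ^ (k - 2)\<close> for some \<open>z\<close> between \<open>t\<close> and \<open>t + 1\<close>. For even \<open>k\<close>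
  this is comparable to \<open>t ^ (k - 2) + 1\<close> as soon as \<open>2 \<le> |t|\<close>, because then
  \<open>|t| \<le> 2 |z|\<close> and \<open>1 \<le> |z|\<close>. On the remaining compact interval it suffices that \<open>Q k\<close>
  is continuous and positive, and positivity follows from the mean value theorem:
  \<open>(t + 1) ^ k - t ^ k = k * \<xi> ^ (k - 1) < k * (t + 1) ^ (k - 1)\<close>, as odd powers are strictly
  increasing.\<close>

lemma power_strict_mono_odd:
  fixes x y :: real
  assumes "odd n" "x < y"
  shows "x ^ n < y ^ n"
proof -
  have "x ^ n \<le> y ^ n" using assms by (intro power_mono_odd) auto
  moreover have "x ^ n \<noteq> y ^ n"
    using assms odd_real_root_power_cancel[of n] by (metis less_irrefl)
  ultimately show ?thesis by simp
qed

lemma real_of_nat_choose_two: "real (n choose 2) = real n * real (n - 1) / 2"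
  by (auto simp add: choose_two field_char_0_class.of_nat_div mod_eq_0_iff_dvd)

lemma power_plus_one_le:
  fixes x :: real
  assumes "0 \<le> x"
  shows "(x + 1) ^ m \<le> 2 ^ m * (x ^ m + 1)"
proof (cases "x \<le> 1")
  case True
  then have "(x + 1) ^ m \<le> 2 ^ m" by (intro power_mono) (use assms in auto)
  then show ?thesis using assms by (simp add: add_increasing2 order_trans)
next
  case False
  then have "(x + 1) ^ m \<le> (2 * x) ^ m" by (intro power_mono) auto
  also have "\<dots> \<le> 2 ^ m * (x ^ m + 1)" by (simp add: power_mult_distrib)
  finally show ?thesis .
qed

lemma compact_pos_bounded_below:
  fixes f :: "'a::topological_space \<Rightarrow> real"
  assumes "compact S" "continuous_on S f" "\<And>x. x \<in> S \<Longrightarrow> 0 < f x"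
  shows "\<exists>M>0. \<forall>x\<in>S. M \<le> f x"
proof (cases "S = {}")
  case False
  then obtain x0 where "x0 \<in> S" "\<forall>x\<in>S. f x0 \<le> f x"
    using continuous_attains_inf[OF assms(1) _ assms(2)] by blast
  then show ?thesis using assms(3) by blast
qed (auto intro: exI[of _ 1])

lemma Q_Lagrange:
  "\<exists>z. t < z \<and> z < t + 1 \<and> Q k t = real (k choose 2) * z ^ (k - 2)"
proof -
  define d :: "nat \<Rightarrow> real \<Rightarrow> real" where
    "d = (!) [\<lambda>x. x ^ k, \<lambda>x. real k * x ^ (k - 1), \<lambda>x. real k * real (k - 1) * x ^ (k - 2)]"
  have "DERIV (d m) s :> d (Suc m) s" if "m < 2" for m s
  proof -
    have "m = 0 \<or> m = 1" using that by auto
    moreover have "k - 1 - 1 = k - 2" by simp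
    ultimately show ?thesis
      unfolding d_def by (auto intro!: derivative_eq_intros simp: mult.assoc)
  qed
  then obtain z where "t < z" "z < t + 1"
    "t ^ k = (\<Sum>m<2. d m (t + 1) / fact m * (t - (t + 1)) ^ m) + d 2 z / fact 2 * (t - (t + 1)) ^ 2"
    using Taylor_down[of 2 d "\<lambda>x. x ^ k" t "t + 1" "t + 1"] by (auto simp: d_def)
  then show ?thesis
    by (intro exI[of _ z]) (simp add: Q_def d_def numeral_2_eq_2 real_of_nat_choose_two[simplified numeral_2_eq_2])
qed

lemma Q_pos:
  assumes "even k" "0 < k"
  shows "0 < Q k t"
proof -
  have "DERIV (\<lambda>x. x ^ k) x :> real k * x ^ (k - 1)" for x :: real
    by (auto intro!: derivative_eq_intros)
  then have "\<exists>\<xi>>t. \<xi> < t + 1 \<and> (t + 1) ^ k - t ^ k = real k * \<xi> ^ (k - 1)"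
    using MVT2[of t "t + 1" "\<lambda>x. x ^ k" "\<lambda>x. real k * x ^ (k - 1)"] by simp
  then obtain \<xi> where "t < \<xi>" "\<xi> < t + 1" "(t + 1) ^ k - t ^ k = real k * \<xi> ^ (k - 1)"
    by blast
  moreover have "\<xi> ^ (k - 1) < (t + 1) ^ (k - 1)"
    using assms \<open>\<xi> < t + 1\<close> by (intro power_strict_mono_odd) auto
  then have "real k * \<xi> ^ (k - 1) < real k * (t + 1) ^ (k - 1)"
    using assms(2) by simp
  ultimately show ?thesis by (simp add: Q_def)
qed

lemma Q_le:
  assumes "even k"
  shows "Q k t \<le> real (k choose 2) * 2 ^ (k - 2) * (t ^ (k - 2) + 1)"
proof -
  obtain z where "t < z" "z < t + 1" and Q_eq: "Q k t = real (k choose 2) * z ^ (k - 2)"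
    using Q_Lagrange by blast
  have "\<bar>z\<bar> ^ (k - 2) \<le> (\<bar>t\<bar> + 1) ^ (k - 2)"
    using \<open>t < z\<close> \<open>z < t + 1\<close> by (intro power_mono) auto
  also have "\<dots> \<le> 2 ^ (k - 2) * (\<bar>t\<bar> ^ (k - 2) + 1)"
    by (simp add: power_plus_one_le)
  finally have "z ^ (k - 2) \<le> 2 ^ (k - 2) * (t ^ (k - 2) + 1)"
    using assms by (simp add: power_even_abs)
  then show ?thesis
    unfolding Q_eq mult.assoc by (intro mult_left_mono) auto
qed

lemma Q_ge_far:
  assumes "even k" "2 \<le> k" "2 \<le> \<bar>t\<bar>"
  shows "real (k choose 2) / 2 ^ (k - 1) * (t ^ (k - 2) + 1) \<le> Q k t"
proof -
  obtain z where "t < z" "z < t + 1" and Q_eq: "Q k t = real (k choose 2) * z ^ (k - 2)"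
    using Q_Lagrange by blast
  have "\<bar>t\<bar> \<le> 2 * \<bar>z\<bar>" "1 \<le> \<bar>z\<bar>"
    using assms(3) \<open>t < z\<close> \<open>z < t + 1\<close> by linarith+
  then have "\<bar>t\<bar> ^ (k - 2) \<le> (2 * \<bar>z\<bar>) ^ (k - 2)" "1 \<le> \<bar>z\<bar> ^ (k - 2)"
    by (intro power_mono one_le_power; simp)+
  then have "t ^ (k - 2) \<le> 2 ^ (k - 2) * z ^ (k - 2)" "1 \<le> z ^ (k - 2)"
    using assms(1) by (simp_all add: power_even_abs power_mult_distrib)
  moreover from this(2) have "z ^ (k - 2) \<le> 2 ^ (k - 2) * z ^ (k - 2)"
    using mult_right_mono[of 1 "2 ^ (k - 2)" "z ^ (k - 2)"] by simp
  moreover have "(2::real) ^ (k - 1) * z ^ (k - 2) = 2 * (2 ^ (k - 2) * z ^ (k - 2))"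
    using assms(2) by (simp flip: power_Suc add: numeral_2_eq_2 Suc_diff_Suc)
  ultimately have "t ^ (k - 2) + 1 \<le> 2 ^ (k - 1) * z ^ (k - 2)"
    by linarith
  then have "real (k choose 2) / 2 ^ (k - 1) * (t ^ (k - 2) + 1)
      \<le> real (k choose 2) / 2 ^ (k - 1) * (2 ^ (k - 1) * z ^ (k - 2))"
    by (intro mult_left_mono) auto
  then show ?thesis
    unfolding Q_eq by simp
qed

lemma Q_ge:
  assumes "even k" "2 \<le> k"
  shows "\<exists>C>0. \<forall>t. C * (t ^ (k - 2) + 1) \<le> Q k t"
proof -
  have "continuous_on {-2..2} (Q k)"
    unfolding Q_def by (intro continuous_intros)
  then obtain M where "M > 0" and M: "\<forall>t\<in>{-2..2}. M \<le> Q k t"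
    using compact_pos_bounded_below[of "{-2..2}" "Q k"] Q_pos assms by auto
  define C where "C = min (M / (2 ^ (k - 2) + 1)) (real (k choose 2) / 2 ^ (k - 1))"
  have "C > 0"
    using \<open>M > 0\<close> assms by (simp add: C_def add_pos_pos)
  moreover have "C * (t ^ (k - 2) + 1) \<le> Q k t" for t
  proof (cases "\<bar>t\<bar> \<le> 2")
    case True
    have "\<bar>t\<bar> ^ (k - 2) \<le> 2 ^ (k - 2)"
      using True by (intro power_mono) auto
    then have "t ^ (k - 2) + 1 \<le> 2 ^ (k - 2) + 1"
      using assms(1) by (simp add: power_even_abs)
    then have "C * (t ^ (k - 2) + 1) \<le> M / (2 ^ (k - 2) + 1) * (2 ^ (k - 2) + 1)"
      using \<open>C > 0\<close> assms(1) unfolding C_def by (intro mult_mono) (auto simp: zero_le_even_power)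
    also have "\<dots> = M"
      using add_pos_pos[of "2 ^ (k - 2)" "1::real"] by simp
    also have "\<dots> \<le> Q k t"
      using M True by (simp add: abs_le_iff)
    finally show ?thesis .
  next
    case False
    have "C * (t ^ (k - 2) + 1) \<le> real (k choose 2) / 2 ^ (k - 1) * (t ^ (k - 2) + 1)"
      using assms(1) unfolding C_def by (intro mult_right_mono) (auto simp: zero_le_even_power)
    also have "\<dots> \<le> Q k t"
      using False assms by (intro Q_ge_far) auto
    finally show ?thesis .
  qed
  ultimately show ?thesis by blast
qed

theorem lemmaA2:
  fixes k :: nat
  assumes "k \<ge> 2" and "even k"
  shows "\<exists>C C'. C > 0 \<and> C' > 0 \<and>
           (\<forall>t::real. C * (t ^ (k - 2) + 1) \<le> Q k t \<and> Q k t \<le> C' * (t ^ (k - 2) + 1))"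
proof -
  obtain C where "C > 0" "\<forall>t. C * (t ^ (k - 2) + 1) \<le> Q k t"
    using Q_ge assms by blast
  moreover have "real (k choose 2) * 2 ^ (k - 2) > 0"
    using assms(1) by simp
  ultimately show ?thesis
    using Q_le[OF assms(2)] by blast
qed

end
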